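(* Let $S$ be a finite set of red and blue points in the plane in general position, containing at least one point of each color, and let $T$ be a minimum bichromatic spanning tree of $S$. Let $e_1$ and $e_2$ be two edges of $T$ that cross each other, and let $\pi(e_1,e_2)$ denote the unique shortest path in $T$ that contains exactly one endpoint of $e_1$ and exactly one endpoint of $e_2$ (i.e., the path in $T$ joining the endpoint of $e_1$ closest to $e_2$ with the endpoint of $e_2$ closest to $e_1$). Then the two endpoints of $\pi(e_1,e_2)$ have different colors.
   Context: A set of points is in general position if no three of them are collinear. A bichromatic spanning tree of a set $S$ of red and blue points is a spanning tree on vertex set $S$, drawn with straight-line segment edges, in which every edge has one red and one blue endpoint. A minimum bichromatic spanning tree (MinBST) is a bichromatic spanning tree of minimum total Euclidean edge length. Two edges (segments) cross if they share a point that is interior to both segments. *)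

theory Defs
  imports "HOL-Analysis.Analysis"
begin

type_synonym point = "real^2"

text \<open>Undirected straight-line graphs: an edge is a two-element set of points.\<close>

definition general_position :: "point set \<Rightarrow> bool" where
  "general_position S \<longleftrightarrow>
     (\<forall>a\<in>S. \<forall>b\<in>S. \<forall>c\<in>S. a \<noteq> b \<and> a \<noteq> c \<and> b \<noteq> c \<longrightarrow> \<not> collinear {a, b, c})"

definition is_path :: "'a set set \<Rightarrow> 'a list \<Rightarrow> bool" where
  "is_path E p \<longleftrightarrow> p \<noteq> [] \<and> distinct p \<and>
     (\<forall>i. Suc i < length p \<longrightarrow> {p ! i, p ! Suc i} \<in> E)"

definition graph_connected :: "'a set \<Rightarrow> 'a set set \<Rightarrow> bool" where
  "graph_connected V E \<longleftrightarrow>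
     (\<forall>u\<in>V. \<forall>v\<in>V. \<exists>p. is_path E p \<and> hd p = u \<and> last p = v)"

definition graph_acyclic :: "'a set set \<Rightarrow> bool" where
  "graph_acyclic E \<longleftrightarrow>
     \<not> (\<exists>c. 3 \<le> length c \<and> is_path E c \<and> {last c, hd c} \<in> E)"

definition spanning_tree :: "'a set \<Rightarrow> 'a set set \<Rightarrow> bool" where
  "spanning_tree V E \<longleftrightarrow>
     (\<forall>e\<in>E. \<exists>u v. e = {u, v} \<and> u \<noteq> v \<and> u \<in> V \<and> v \<in> V)
     \<and> graph_connected V E \<and> graph_acyclic E"

definition bichromatic_spanning_tree ::
  "'a set \<Rightarrow> 'a set \<Rightarrow> 'a set \<Rightarrow> 'a set set \<Rightarrow> bool" where
  "bichromatic_spanning_tree S R B E \<longleftrightarrow>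
     spanning_tree S E \<and> (\<forall>e\<in>E. \<exists>r b. r \<in> R \<and> b \<in> B \<and> e = {r, b})"

definition edge_length :: "point set \<Rightarrow> real" where
  "edge_length e = (THE d. \<exists>x y. e = {x, y} \<and> d = dist x y)"

definition total_length :: "point set set \<Rightarrow> real" where
  "total_length E = (\<Sum>e\<in>E. edge_length e)"

definition MinBST :: "point set \<Rightarrow> point set \<Rightarrow> point set \<Rightarrow> point set set \<Rightarrow> bool" where
  "MinBST S R B T \<longleftrightarrow> bichromatic_spanning_tree S R B T \<and>
     (\<forall>T'. bichromatic_spanning_tree S R B T' \<longrightarrow> total_length T \<le> total_length T')"

definition edges_cross :: "point set \<Rightarrow> point set \<Rightarrow> bool" where
  "edges_cross e1 e2 \<longleftrightarrow> (\<exists>a b c d. e1 = {a, b} \<and> e2 = {c, d} \<and>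
     open_segment a b \<inter> open_segment c d \<noteq> {})"

definition joining_path :: "'a set set \<Rightarrow> 'a set \<Rightarrow> 'a set \<Rightarrow> 'a list \<Rightarrow> bool" where
  "joining_path T e1 e2 p \<longleftrightarrow> is_path T p \<and>
     card (set p \<inter> e1) = 1 \<and> card (set p \<inter> e2) = 1"

end

theory Submission
  imports Defs
begin

text \<open>A shortest joining path has one end in each edge; write it as running from b \<in> e1 = {a, b}
  to c \<in> e2 = {c, d}. If b and c had the same colour, then a, c would have different colours and so
  would b, d. Since the segments ab and cd cross and the four points are in general position, the
  triangle inequality at the crossing point gives |ac| + |bd| < |ab| + |cd|, so |ac| < |ab| or
  |bd| < |cd|. In the first case replacing ab by ac keeps a connected bichromatic graph (the path
  reconnects b to c without passing through a), which contains a bichromatic spanning tree shorter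
  than T; the second case is symmetric. Both contradict minimality.\<close>

lemma collinear_if_closed_open_segment:
  fixes a b c x :: "'a::euclidean_space"
  assumes "x \<in> closed_segment a c" "x \<in> open_segment a b"
  shows "collinear {a, b, c}"
proof -
  have "x \<noteq> a" using assms(2) by (auto simp: open_segment_def)
  moreover have "collinear {c, a, x}"
    by (rule collinear_subset[OF collinear_closed_segment[of a c]]) (use assms(1) in auto)
  moreover have "collinear {a, x, b}"
    by (rule collinear_subset[OF collinear_closed_segment[of a b]])
      (use assms(2) open_closed_segment in auto)
  ultimately have "collinear {c, a, b}" using collinear_3_trans by blast
  then show ?thesis by (simp add: insert_commute)
qed

lemma dist_crossing_segments_exchange_less:
  fixes a b c d x :: "'a::euclidean_space"
  assumes "x \<in> open_segment a b" "x \<in> open_segment c d" "\<not> collinear {a, b, c}"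
  shows "dist a c + dist b d < dist a b + dist c d"
proof -
  have ab: "dist a b = dist a x + dist x b"
    using open_closed_segment[OF assms(1)] between between_mem_segment by blast
  have cd: "dist c d = dist c x + dist x d"
    using open_closed_segment[OF assms(2)] between between_mem_segment by blast
  have "dist a c \<noteq> dist a x + dist x c"
  proof
    assume "dist a c = dist a x + dist x c"
    then have "x \<in> closed_segment a c" using between between_mem_segment by blast
    then show False using collinear_if_closed_open_segment assms by blast
  qed
  then have "dist a c < dist a x + dist x c" using dist_triangle[of a c x] by linarith
  moreover have "dist b d \<le> dist b x + dist x d" by (rule dist_triangle)
  ultimately show ?thesis using ab cd by (simp add: dist_commute)
qed

lemma open_segment_from_endpoint:
  assumes "e = {a, b}" "x \<in> open_segment a b" "y \<in> e"
  shows "\<exists>z. e = {y, z} \<and> x \<in> open_segment y z"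
  using assms by (auto simp: insert_commute open_segment_commute)

lemma crossing_edges_disjoint:
  assumes "general_position S" "e1 \<subseteq> S" "e2 \<subseteq> S" "e1 \<noteq> e2" "edges_cross e1 e2"
  shows "e1 \<inter> e2 = {}"
proof (rule ccontr)
  assume "e1 \<inter> e2 \<noteq> {}"
  then obtain y where y: "y \<in> e1" "y \<in> e2" by blast
  obtain a b c d x where "e1 = {a, b}" "e2 = {c, d}"
    and x: "x \<in> open_segment a b" "x \<in> open_segment c d"
    using assms(5) unfolding edges_cross_def by blast
  then obtain q r where q: "e1 = {y, q}" "x \<in> open_segment y q"
    and r: "e2 = {y, r}" "x \<in> open_segment y r"
    using open_segment_from_endpoint y by metis
  have "collinear {y, q, r}"
    using collinear_if_closed_open_segment[OF open_closed_segment[OF r(2)] q(2)] .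
  moreover have "y \<noteq> q" "y \<noteq> r" using q(2) r(2) by auto
  moreover have "q \<noteq> r" using assms(4) q(1) r(1) by blast
  ultimately show False
    using assms(1-3) q(1) r(1) unfolding general_position_def by blast
qed

definition adj :: "'a set set \<Rightarrow> ('a \<times> 'a) set" where
  "adj E = {(x, y). {x, y} \<in> E}"

lemma adj_mono: "E \<subseteq> F \<Longrightarrow> adj E \<subseteq> adj F"
  unfolding adj_def by blast

lemma converse_adj [simp]: "(adj E)\<inverse> = adj E"
  unfolding adj_def by (auto simp: insert_commute)

lemma rtrancl_adj_sym: "(x, y) \<in> (adj E)\<^sup>* \<Longrightarrow> (y, x) \<in> (adj E)\<^sup>*"
  using rtrancl_converseI[of x y "adj E"] by simp

lemma rtrancl_adj_insert:
  assumes "(x, y) \<in> (adj E)\<^sup>*"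
  shows "(adj (insert {x, y} E))\<^sup>* = (adj E)\<^sup>*"
proof -
  have "adj (insert {x, y} E) = insert (x, y) (insert (y, x) (adj E))"
    unfolding adj_def by (auto simp: doubleton_eq_iff)
  then show ?thesis
    using rtrancl_subset[of "adj E" "adj (insert {x, y} E)"] assms rtrancl_adj_sym[OF assms]
    by (auto simp: adj_mono)
qed

lemma is_path_Cons:
  "is_path E (x # p) \<longleftrightarrow> p = [] \<or> (is_path E p \<and> x \<notin> set p \<and> {x, hd p} \<in> E)"
proof (cases p)
  case (Cons y q)
  have "(\<forall>i. Suc i < length (x # p) \<longrightarrow> {(x # p) ! i, (x # p) ! Suc i} \<in> E) \<longleftrightarrow>
        {x, y} \<in> E \<and> (\<forall>i. Suc i < length p \<longrightarrow> {p ! i, p ! Suc i} \<in> E)" (is "?L \<longleftrightarrow> ?R")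
  proof
    assume L: ?L
    show ?R using L[rule_format, of 0] L[rule_format, of "Suc _"] Cons by auto
  next
    assume ?R
    then show ?L using Cons by (auto simp: nth_Cons split: nat.split)
  qed
  then show ?thesis using Cons unfolding is_path_def by auto
qed (simp add: is_path_def)

lemma is_path_imp_rtrancl: "is_path E p \<Longrightarrow> (hd p, last p) \<in> (adj E)\<^sup>*"
proof (induction p)
  case (Cons x p)
  show ?case
  proof (cases "p = []")
    case False
    then have "(hd p, last p) \<in> (adj E)\<^sup>*" "(x, hd p) \<in> adj E"
      using Cons by (auto simp: is_path_Cons adj_def)
    then show ?thesis using False by (simp add: converse_rtrancl_into_rtrancl)
  qed simp
qed (simp add: is_path_def)

lemma is_path_drop: "is_path E p \<Longrightarrow> i < length p \<Longrightarrow> is_path E (drop i p)"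
  unfolding is_path_def by (auto simp: add.commute[of i])

lemma is_path_take: "is_path E p \<Longrightarrow> 0 < k \<Longrightarrow> is_path E (take k p)"
  unfolding is_path_def by auto

lemma is_path_rev: "is_path E p \<Longrightarrow> is_path E (rev p)"
  unfolding is_path_def
proof (intro conjI allI impI)
  fix i assume p: "p \<noteq> [] \<and> distinct p \<and> (\<forall>i. Suc i < length p \<longrightarrow> {p ! i, p ! Suc i} \<in> E)"
    and i: "Suc i < length (rev p)"
  define j where "j = length p - Suc (Suc i)"
  have "{p ! j, p ! Suc j} \<in> E" using p i unfolding j_def by auto
  moreover have "rev p ! i = p ! Suc j" "rev p ! Suc i = p ! j"
    using i unfolding j_def by (auto simp: rev_nth Suc_diff_Suc)
  ultimately show "{rev p ! i, rev p ! Suc i} \<in> E" by (simp add: insert_commute)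
qed simp_all

lemma rtrancl_imp_is_path: "(x, y) \<in> (adj E)\<^sup>* \<Longrightarrow> \<exists>p. is_path E p \<and> hd p = x \<and> last p = y"
proof (induction rule: converse_rtrancl_induct)
  case base
  show ?case by (rule exI[of _ "[y]"]) (simp add: is_path_def)
next
  case (step x z)
  then obtain p where p: "is_path E p" "hd p = z" "last p = y" by blast
  show ?case
  proof (cases "x \<in> set p")
    case True
    \<comment> \<open>cut the cycle: start the path at the earlier occurrence of x\<close>
    then obtain i where "i < length p" "p ! i = x" by (meson in_set_conv_nth)
    then show ?thesis using p is_path_drop by (intro exI[of _ "drop i p"]) (auto simp: hd_drop_conv_nth)
  next
    case False
    moreover have "p \<noteq> []" using p by (simp add: is_path_def)
    ultimately show ?thesis using p step(1)
      by (intro exI[of _ "x # p"]) (auto simp: is_path_Cons adj_def)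
  qed
qed

lemma graph_connected_iff_rtrancl:
  "graph_connected V E \<longleftrightarrow> (\<forall>u\<in>V. \<forall>v\<in>V. (u, v) \<in> (adj E)\<^sup>*)"
  unfolding graph_connected_def
  by (metis is_path_imp_rtrancl rtrancl_imp_is_path)

lemma is_path_subst_edges:
  assumes "is_path E p" "\<forall>i. Suc i < length p \<longrightarrow> {p ! i, p ! Suc i} \<in> F"
  shows "is_path F p"
  using assms unfolding is_path_def by blast

lemma is_path_segment:
  assumes "is_path E p" "i \<le> j" "j < length p"
  shows "\<exists>q. is_path E q \<and> set q \<subseteq> set p \<and> hd q = p ! i \<and> last q = p ! j \<and> length q = j - i + 1"
proof -
  define q where "q = take (j - i + 1) (drop i p)"
  have "is_path E q" unfolding q_def using assms by (intro is_path_take is_path_drop) auto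
  moreover have "set q \<subseteq> set p" unfolding q_def by (meson in_set_takeD in_set_dropD subsetI)
  moreover have "length q = j - i + 1" unfolding q_def using assms by simp
  moreover have "hd q = p ! i" unfolding q_def using assms by (simp add: hd_take hd_drop_conv_nth)
  moreover have "last q = p ! j"
    using \<open>length q = j - i + 1\<close> assms unfolding q_def by (simp add: last_conv_nth)
  ultimately show ?thesis by blast
qed

lemma cycle_closing_edge_not_on_path:
  assumes "is_path E c" "3 \<le> length c" "Suc i < length c"
  shows "{c ! i, c ! Suc i} \<noteq> {last c, hd c}"
proof
  assume eq: "{c ! i, c ! Suc i} = {last c, hd c}"
  have "c \<noteq> []" using assms(2) by auto
  then have "{c ! i, c ! Suc i} = {c ! (length c - 1), c ! 0}"
    using eq by (simp add: last_conv_nth hd_conv_nth)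
  moreover have "distinct c" using assms(1) unfolding is_path_def by blast
  ultimately have "(i = length c - 1 \<and> Suc i = 0) \<or> (i = 0 \<and> Suc i = length c - 1)"
    using assms(3) \<open>c \<noteq> []\<close> by (auto simp: doubleton_eq_iff nth_eq_iff_index_eq)
  then show False using assms by auto
qed

lemma rtrancl_adj_remove_cycle_edge:
  assumes "is_path E c" "3 \<le> length c"
  shows "(adj (E - {{last c, hd c}}))\<^sup>* = (adj E)\<^sup>*"
proof
  let ?G = "E - {{last c, hd c}}"
  have "is_path ?G c"
    using assms cycle_closing_edge_not_on_path
    by (intro is_path_subst_edges[OF assms(1)]) (auto simp: is_path_def)
  then have "(adj (insert {hd c, last c} ?G))\<^sup>* = (adj ?G)\<^sup>*"
    by (intro rtrancl_adj_insert is_path_imp_rtrancl)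
  moreover have "E \<subseteq> insert {hd c, last c} ?G" by (auto simp: insert_commute)
  ultimately show "(adj E)\<^sup>* \<subseteq> (adj ?G)\<^sup>*" by (metis adj_mono rtrancl_mono)
qed (intro rtrancl_mono adj_mono; blast)

lemma bichromatic_spanning_subtree:
  assumes "finite E"
    and "\<forall>e\<in>E. \<exists>u v. e = {u, v} \<and> u \<noteq> v \<and> u \<in> V \<and> v \<in> V"
    and "\<forall>e\<in>E. \<exists>r b. r \<in> R \<and> b \<in> B \<and> e = {r, b}"
    and "graph_connected V E"
  shows "\<exists>F\<subseteq>E. bichromatic_spanning_tree V R B F"
proof -
  define P where "P F \<longleftrightarrow> F \<subseteq> E \<and> graph_connected V F" for F
  \<comment> \<open>a connected subgraph with the fewest edges is acyclic\<close>
  obtain F where F: "P F" and least: "\<And>G. P G \<Longrightarrow> card F \<le> card G"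
    using ex_has_least_nat[of P E card] assms(4) unfolding P_def by auto
  have "F \<subseteq> E" "graph_connected V F" using F unfolding P_def by auto
  have "graph_acyclic F"
    unfolding graph_acyclic_def
  proof
    assume "\<exists>c. 3 \<le> length c \<and> is_path F c \<and> {last c, hd c} \<in> F"
    then obtain c where c: "3 \<le> length c" "is_path F c" "{last c, hd c} \<in> F" by blast
    let ?G = "F - {{last c, hd c}}"
    have "graph_connected V ?G"
      using \<open>graph_connected V F\<close>
      unfolding graph_connected_iff_rtrancl rtrancl_adj_remove_cycle_edge[OF c(2,1)] .
    then have "card F \<le> card ?G" using least \<open>F \<subseteq> E\<close> unfolding P_def by blast
    moreover have "card ?G < card F"
      using c(3) finite_subset[OF \<open>F \<subseteq> E\<close> assms(1)] by (intro card_Diff1_less)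
    ultimately show False by linarith
  qed
  moreover have "\<forall>e\<in>F. \<exists>u v. e = {u, v} \<and> u \<noteq> v \<and> u \<in> V \<and> v \<in> V"
    and "\<forall>e\<in>F. \<exists>r b. r \<in> R \<and> b \<in> B \<and> e = {r, b}"
    using assms(2,3) \<open>F \<subseteq> E\<close> by blast+
  ultimately have "bichromatic_spanning_tree V R B F"
    using \<open>graph_connected V F\<close> unfolding bichromatic_spanning_tree_def spanning_tree_def by blast
  then show ?thesis using \<open>F \<subseteq> E\<close> by blast
qed

lemma graph_connected_exchange:
  assumes "graph_connected V T" "{u, v} \<in> T"
    and "is_path T q" "hd q = v" "last q = w" "u \<notin> set q"
  shows "graph_connected V (insert {u, w} (T - {{u, v}}))"
proof -
  let ?T' = "insert {u, w} (T - {{u, v}})"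
  have "is_path ?T' q"
  proof (rule is_path_subst_edges[OF assms(3)], intro allI impI)
    fix i assume i: "Suc i < length q"
    have "{q ! i, q ! Suc i} \<in> T" using assms(3) i unfolding is_path_def by blast
    moreover have "q ! i \<noteq> u" "q ! Suc i \<noteq> u" using assms(6) i by (auto simp: nth_mem)
    ultimately show "{q ! i, q ! Suc i} \<in> ?T'" by (simp add: doubleton_eq_iff)
  qed
  then have "(v, w) \<in> (adj ?T')\<^sup>*" using is_path_imp_rtrancl assms(4,5) by fastforce
  moreover have "(w, u) \<in> adj ?T'" unfolding adj_def by (auto simp: insert_commute)
  ultimately have "(v, u) \<in> (adj ?T')\<^sup>*" by (rule rtrancl_into_rtrancl)
  then have "(u, v) \<in> (adj ?T')\<^sup>*" by (rule rtrancl_adj_sym)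
  then have "(adj (insert {u, v} ?T'))\<^sup>* = (adj ?T')\<^sup>*" by (rule rtrancl_adj_insert)
  moreover have "T \<subseteq> insert {u, v} ?T'" by auto
  ultimately have "(adj T)\<^sup>* \<subseteq> (adj ?T')\<^sup>*" by (metis adj_mono rtrancl_mono)
  then show ?thesis using assms(1) unfolding graph_connected_iff_rtrancl by blast
qed

lemma edge_length_doubleton [simp]: "edge_length {x, y} = dist x y"
  unfolding edge_length_def
  by (rule the_equality) (auto simp: doubleton_eq_iff dist_commute)

lemma total_length_mono:
  assumes "finite E" "F \<subseteq> E" "\<forall>e\<in>E. \<exists>x y. e = {x, y}"
  shows "total_length F \<le> total_length E"
  unfolding total_length_def
  using assms by (intro sum_mono2) auto

lemma total_length_exchange:
  assumes "finite T" "{u, v} \<in> T"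
  shows "total_length (insert {u, w} (T - {{u, v}})) \<le> total_length T - dist u v + dist u w"
proof -
  have "total_length (insert {u, w} (T - {{u, v}})) \<le> total_length (T - {{u, v}}) + dist u w"
    unfolding total_length_def using assms(1) by (simp add: sum.insert_if)
  also have "total_length (T - {{u, v}}) = total_length T - dist u v"
    unfolding total_length_def using sum.remove[OF assms, of edge_length] by simp
  finally show ?thesis .
qed

lemma spanning_tree_finite: "finite V \<Longrightarrow> spanning_tree V E \<Longrightarrow> finite E"
  unfolding spanning_tree_def
  by (rule finite_subset[of E "Pow V"]) auto

lemma spanning_tree_edge_subset: "spanning_tree V E \<Longrightarrow> e \<in> E \<Longrightarrow> e \<subseteq> V"
  unfolding spanning_tree_def by fastforce

lemma bichromatic_spanning_tree_edge_colours:
  assumes "bichromatic_spanning_tree S R B T" "{a, b} \<in> T"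
  shows "(a \<in> R \<and> b \<in> B) \<or> (a \<in> B \<and> b \<in> R)"
  using assms unfolding bichromatic_spanning_tree_def by (fastforce simp: doubleton_eq_iff)

lemma MinBST_exchange:
  assumes "finite S" "MinBST S R B T" "{u, v} \<in> T"
    and "is_path T q" "hd q = v" "last q = w" "u \<notin> set q" "w \<in> S"
    and "(u \<in> R \<and> w \<in> B) \<or> (u \<in> B \<and> w \<in> R)"
  shows "dist u v \<le> dist u w"
proof (rule ccontr)
  assume less: "\<not> dist u v \<le> dist u w"
  let ?T' = "insert {u, w} (T - {{u, v}})"
  have T: "bichromatic_spanning_tree S R B T"
    and min: "\<And>F. bichromatic_spanning_tree S R B F \<Longrightarrow> total_length T \<le> total_length F"
    using assms(2) unfolding MinBST_def by auto
  have tree: "spanning_tree S T" and bi: "\<forall>e\<in>T. \<exists>r b. r \<in> R \<and> b \<in> B \<and> e = {r, b}"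
    using T unfolding bichromatic_spanning_tree_def by auto
  have finT: "finite T" using spanning_tree_finite[OF assms(1) tree] .
  have "u \<noteq> w" using assms(4,6,7) last_in_set unfolding is_path_def by blast
  moreover have "u \<in> S" using spanning_tree_edge_subset[OF tree assms(3)] by simp
  ultimately have wf': "\<forall>e\<in>?T'. \<exists>x y. e = {x, y} \<and> x \<noteq> y \<and> x \<in> S \<and> y \<in> S"
    using tree assms(8) unfolding spanning_tree_def by auto
  moreover have "\<forall>e\<in>?T'. \<exists>r b. r \<in> R \<and> b \<in> B \<and> e = {r, b}"
    using bi assms(9) by (auto simp: insert_commute)
  moreover have "graph_connected S ?T'"
    using tree assms(3-7) unfolding spanning_tree_def by (intro graph_connected_exchange) auto
  ultimately obtain F where F: "F \<subseteq> ?T'" "bichromatic_spanning_tree S R B F"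
    using bichromatic_spanning_subtree[of ?T' S R B] finT by auto
  have "total_length T \<le> total_length F" using min F(2) .
  also have "\<dots> \<le> total_length ?T'" by (rule total_length_mono[OF _ F(1)]) (use finT wf' in \<open>simp, meson\<close>)
  also have "\<dots> < total_length T"
    using total_length_exchange[OF finT assms(3), of w] less by linarith
  finally show False by simp
qed

lemma shortest_joining_path_ends:
  assumes jp: "joining_path T e1 e2 p"
    and shortest: "\<forall>q. joining_path T e1 e2 q \<longrightarrow> length p \<le> length q"
  shows "(hd p \<in> e1 \<and> last p \<in> e2) \<or> (hd p \<in> e2 \<and> last p \<in> e1)"
proof -
  have p: "is_path T p" using jp unfolding joining_path_def by blast
  obtain y1 y2 where y: "set p \<inter> e1 = {y1}" "set p \<inter> e2 = {y2}"
    using jp unfolding joining_path_def by (metis card_1_singletonE)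
  obtain i j where ij: "i < length p" "p ! i = y1" "j < length p" "p ! j = y2"
    using y by (metis IntD1 in_set_conv_nth insertI1)
  have "min i j \<le> max i j" "max i j < length p" "p \<noteq> []" using ij by auto
  from is_path_segment[OF p this(1,2)] obtain q where q: "is_path T q" "set q \<subseteq> set p"
      "hd q = p ! min i j" "last q = p ! max i j" "length q = max i j - min i j + 1"
    by blast
  \<comment> \<open>the segment of p between y1 and y2 is again a joining path, so it is all of p\<close>
  have "q \<noteq> []" using q(5) by auto
  then have "y1 \<in> set q" "y2 \<in> set q"
    using q(3,4) hd_in_set last_in_set ij by (metis min_def max_def)+
  then have "set q \<inter> e1 = {y1}" "set q \<inter> e2 = {y2}" using q(2) y by blast+
  then have "joining_path T e1 e2 q" using q(1) unfolding joining_path_def by simp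
  then have "length p \<le> max i j - min i j + 1" using shortest q(5) by metis
  then have "min i j = 0" "max i j = length p - 1" using ij by auto
  moreover have "hd p = p ! 0" "last p = p ! (length p - 1)"
    using \<open>p \<noteq> []\<close> by (simp_all add: hd_conv_nth last_conv_nth)
  ultimately show ?thesis using ij y by (cases "i \<le> j") (auto simp: min_def max_def)
qed

lemma MinBST_crossing_path_ends_coloured:
  assumes "finite S" "R \<union> B = S" "R \<inter> B = {}" "general_position S" "MinBST S R B T"
    and "e1 \<in> T" "e2 \<in> T" "e1 \<noteq> e2" "edges_cross e1 e2"
    and "joining_path T e1 e2 p" "hd p \<in> e1" "last p \<in> e2"
  shows "(hd p \<in> R \<and> last p \<in> B) \<or> (hd p \<in> B \<and> last p \<in> R)"
proof -
  define b c where "b = hd p" and "c = last p"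
  have T: "bichromatic_spanning_tree S R B T" using assms(5) unfolding MinBST_def by blast
  have sub: "e1 \<subseteq> S" "e2 \<subseteq> S"
    using T assms(6,7) spanning_tree_edge_subset bichromatic_spanning_tree_def by blast+
  obtain a0 b0 c0 d0 x where "e1 = {a0, b0}" "e2 = {c0, d0}"
    and "x \<in> open_segment a0 b0" "x \<in> open_segment c0 d0"
    using assms(9) unfolding edges_cross_def by blast
  then obtain a d where a: "e1 = {b, a}" "x \<in> open_segment a b"
    and d: "e2 = {c, d}" "x \<in> open_segment c d"
    using open_segment_from_endpoint assms(11,12) unfolding b_def c_def
    by (metis open_segment_commute)
  have p: "is_path T p" "p \<noteq> []" using assms(10) unfolding joining_path_def is_path_def by blast+
  have "set p \<inter> e1 = {b}" "set p \<inter> e2 = {c}"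
    using assms(10-12) p(2) unfolding joining_path_def b_def c_def
    by (metis IntI card_1_singletonE hd_in_set last_in_set singletonD)+
  moreover have "a \<noteq> b" "c \<noteq> d" using a(2) d(2) by auto
  ultimately have "a \<notin> set p" "d \<notin> set p" using a(1) d(1) by auto
  have eT: "{a, b} \<in> T" "{d, c} \<in> T" using assms(6,7) a(1) d(1) by (auto simp: insert_commute)
  have inS: "b \<in> S" "c \<in> S" using sub a(1) d(1) by auto
  have "\<not> collinear {a, b, c}"
    using assms(4) sub a(1) d(1) \<open>a \<noteq> b\<close> crossing_edges_disjoint[OF assms(4) sub assms(8,9)]
    unfolding general_position_def by auto
  then have crossing: "dist a c + dist b d < dist a b + dist c d"
    using dist_crossing_segments_exchange_less a(2) d(2) by blast
  show ?thesis
  proof (rule ccontr)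
    assume "\<not> ?thesis"
    then have "(b \<in> R \<and> c \<in> R) \<or> (b \<in> B \<and> c \<in> B)" using inS assms(2) unfolding b_def c_def by blast
    then have ac: "(a \<in> R \<and> c \<in> B) \<or> (a \<in> B \<and> c \<in> R)"
      and db: "(d \<in> R \<and> b \<in> B) \<or> (d \<in> B \<and> b \<in> R)"
      using bichromatic_spanning_tree_edge_colours[OF T] eT assms(3) by blast+
    have "dist a b \<le> dist a c"
      using MinBST_exchange[OF assms(1,5) eT(1) p(1) b_def[symmetric] c_def[symmetric]] \<open>a \<notin> set p\<close> inS ac
      by blast
    moreover have "dist d c \<le> dist d b"
      using MinBST_exchange[OF assms(1,5) eT(2) is_path_rev[OF p(1)]] \<open>d \<notin> set p\<close> inS db p(2)
      unfolding b_def c_def by (simp add: hd_rev last_rev)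
    ultimately show False using crossing by (simp add: dist_commute)
  qed
qed

theorem lemma3:
  fixes S R B :: "point set" and T :: "point set set"
    and e1 e2 :: "point set" and p :: "point list"
  assumes "finite S"
    and "R \<union> B = S" and "R \<inter> B = {}" and "R \<noteq> {}" and "B \<noteq> {}"
    and "general_position S"
    and "MinBST S R B T"
    and "e1 \<in> T" and "e2 \<in> T" and "e1 \<noteq> e2"
    and "edges_cross e1 e2"
    and "joining_path T e1 e2 p"
    and "\<forall>q. joining_path T e1 e2 q \<longrightarrow> length p \<le> length q"
  shows "(hd p \<in> R \<and> last p \<in> B) \<or> (hd p \<in> B \<and> last p \<in> R)"
proof -
  have "joining_path T e2 e1 p" using assms(12) unfolding joining_path_def by simp
  moreover have "edges_cross e2 e1" using assms(11) unfolding edges_cross_def by blast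
  moreover have "(hd p \<in> e1 \<and> last p \<in> e2) \<or> (hd p \<in> e2 \<and> last p \<in> e1)"
    using shortest_joining_path_ends[OF assms(12,13)] .
  ultimately show ?thesis
    using MinBST_crossing_path_ends_coloured[OF assms(1-3,6,7)] assms(8-12) by metis
qed

end
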